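(* Let $G_1=(V_1,E_1)$ be a graph of maximum degree $\Delta_1$ and let $G_2=(V_2,E_2)$ be a $\delta_2$-regular graph. Let $S_1\subseteq V_1$. For every integer $k\in\{\delta_2-\Delta_1,\dots,\Delta_1+\delta_2\}$, $S_1\times V_2$ is a $k$-daf set in $G_1\times G_2$ if and only if $S_1$ is a $(k-\delta_2)$-daf set in $G_1$.
   Context: All graphs are finite and simple (with non-empty vertex sets). For a graph $G=(V,E)$, a set $S\subseteq V$ and $v\in V$, let $\delta_S(v)=|\{u\in S: uv\in E\}|$ and $\overline{S}=V\setminus S$. For an integer $k$, a non-empty set $S\subseteq V$ is a defensive $k$-alliance if $\delta_S(v)\ge \delta_{\overline S}(v)+k$ for every $v\in S$. A set $X\subseteq V$ is a defensive $k$-alliance free set ($k$-daf set) if no defensive $k$-alliance $S$ satisfies $S\subseteq X$. The Cartesian product $G_1\times G_2$ of $G_1=(V_1,E_1)$, $G_2=(V_2,E_2)$ has vertex set $V_1\times V_2$, with $(a,b)$ adjacent to $(c,d)$ iff either $a=c$ and $bd\in E_2$, or $b=d$ and $ac\in E_1$. *)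

theory Defs
  imports Main
begin

definition graph :: "'a set \<Rightarrow> ('a \<Rightarrow> 'a \<Rightarrow> bool) \<Rightarrow> bool" where
  "graph V E \<longleftrightarrow> finite V \<and> V \<noteq> {} \<and>
     (\<forall>u v. E u v \<longrightarrow> u \<in> V \<and> v \<in> V) \<and>
     (\<forall>u v. E u v \<longrightarrow> E v u) \<and> (\<forall>v. \<not> E v v)"

definition degree :: "'a set \<Rightarrow> ('a \<Rightarrow> 'a \<Rightarrow> bool) \<Rightarrow> 'a \<Rightarrow> nat" where
  "degree V E v = card {u \<in> V. E v u}"

definition max_degree :: "'a set \<Rightarrow> ('a \<Rightarrow> 'a \<Rightarrow> bool) \<Rightarrow> nat" where
  "max_degree V E = Max (degree V E ` V)"

definition regular :: "'a set \<Rightarrow> ('a \<Rightarrow> 'a \<Rightarrow> bool) \<Rightarrow> nat \<Rightarrow> bool" where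
  "regular V E d \<longleftrightarrow> (\<forall>v\<in>V. degree V E v = d)"

definition nbr_count :: "('a \<Rightarrow> 'a \<Rightarrow> bool) \<Rightarrow> 'a set \<Rightarrow> 'a \<Rightarrow> nat" where
  "nbr_count E S v = card {u \<in> S. E u v}"

definition defensive_alliance ::
  "'a set \<Rightarrow> ('a \<Rightarrow> 'a \<Rightarrow> bool) \<Rightarrow> int \<Rightarrow> 'a set \<Rightarrow> bool" where
  "defensive_alliance V E k S \<longleftrightarrow> S \<noteq> {} \<and> S \<subseteq> V \<and>
     (\<forall>v\<in>S. int (nbr_count E S v) \<ge> int (nbr_count E (V - S) v) + k)"

definition daf_set :: "'a set \<Rightarrow> ('a \<Rightarrow> 'a \<Rightarrow> bool) \<Rightarrow> int \<Rightarrow> 'a set \<Rightarrow> bool" where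
  "daf_set V E k X \<longleftrightarrow> X \<subseteq> V \<and>
     (\<forall>S. defensive_alliance V E k S \<longrightarrow> \<not> S \<subseteq> X)"

definition cart_edge ::
  "('a \<Rightarrow> 'a \<Rightarrow> bool) \<Rightarrow> ('b \<Rightarrow> 'b \<Rightarrow> bool) \<Rightarrow> 'a \<times> 'b \<Rightarrow> 'a \<times> 'b \<Rightarrow> bool" where
  "cart_edge E1 E2 x y \<longleftrightarrow>
     (fst x = fst y \<and> E2 (snd x) (snd y)) \<or> (snd x = snd y \<and> E1 (fst x) (fst y))"

end

theory Submission
  imports Defs
begin

(* In the Cartesian product G1 x G2, the neighbours of a vertex (a,b) inside a
   set T split into a "column" part (vertices (a,b') with b' adjacent to b in G2) and a "row"
   part (vertices (a',b) with a' adjacent to a in G1, i.e. neighbours of a in the slice of T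
   at height b). *)

text \<open>In a symmetric relation, counting in-neighbours is the same as counting out-neighbours,
  so every vertex of a d-regular graph has exactly d neighbours pointing to it.\<close>
lemma regular_in_degree:
  assumes "graph V E" "regular V E d" "b \<in> V"
  shows "card {b' \<in> V. E b' b} = d"
proof -
  have "{b' \<in> V. E b' b} = {u \<in> V. E b u}"
    using assms(1) unfolding graph_def by blast
  then show ?thesis
    using assms(2,3) unfolding regular_def degree_def by simp
qed

lemma nbr_count_mono:
  assumes "finite T" "S \<subseteq> T"
  shows "nbr_count E S v \<le> nbr_count E T v"
  unfolding nbr_count_def using assms by (intro card_mono) auto

definition slice :: "('a \<times> 'b) set \<Rightarrow> 'b \<Rightarrow> 'a set" where
  "slice T b = {a. (a, b) \<in> T}"

lemma slice_subset_fst: "slice T b \<subseteq> fst ` T"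
  unfolding slice_def by force

text \<open>The two parts are disjoint because E2 is irreflexive.\<close>
lemma nbr_count_cart:
  assumes "finite T" and irrefl: "\<And>v. \<not> E2 v v"
  shows "nbr_count (cart_edge E1 E2) T (a, b) =
         card {b'. (a, b') \<in> T \<and> E2 b' b} + nbr_count E1 (slice T b) a"
proof -
  define Col where "Col = {b'. (a, b') \<in> T \<and> E2 b' b}"
  define Row where "Row = {a' \<in> slice T b. E1 a' a}"
  have split: "{u \<in> T. cart_edge E1 E2 u (a, b)} = (\<lambda>b'. (a, b')) ` Col \<union> (\<lambda>a'. (a', b)) ` Row"
    unfolding Col_def Row_def slice_def cart_edge_def by force
  have disjoint: "(\<lambda>b'. (a, b')) ` Col \<inter> (\<lambda>a'. (a', b)) ` Row = {}"
    using irrefl unfolding Col_def Row_def by auto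
  have "Col \<subseteq> snd ` T" "Row \<subseteq> fst ` T"
    unfolding Col_def Row_def slice_def by force+
  then have "finite Col" "finite Row"
    using \<open>finite T\<close> by (auto intro: finite_subset)
  then have "card ((\<lambda>b'. (a, b')) ` Col \<union> (\<lambda>a'. (a', b)) ` Row) = card Col + card Row"
    using disjoint by (simp add: card_Un_disjoint card_image inj_on_def)
  then show ?thesis
    unfolding nbr_count_def split by (simp add: Col_def Row_def)
qed

lemma alliance_product:
  assumes g1: "graph V1 E1" and g2: "graph V2 E2" and reg: "regular V2 E2 d"
    and A: "defensive_alliance V1 E1 (k - int d) A"
  shows "defensive_alliance (V1 \<times> V2) (cart_edge E1 E2) k (A \<times> V2)"
proof -
  have "A \<subseteq> V1" "A \<noteq> {}" "V2 \<noteq> {}" "finite V1" "finite V2" and irrefl: "\<And>v. \<not> E2 v v"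
    using A g1 g2 unfolding defensive_alliance_def graph_def by auto
  have "int (nbr_count (cart_edge E1 E2) (V1 \<times> V2 - A \<times> V2) (a, b)) + k
        \<le> int (nbr_count (cart_edge E1 E2) (A \<times> V2) (a, b))" if "a \<in> A" "b \<in> V2" for a b
  proof -
    have alliance_at_a: "int (nbr_count E1 (V1 - A) a) + (k - int d) \<le> int (nbr_count E1 A a)"
      using A \<open>a \<in> A\<close> unfolding defensive_alliance_def by auto
    have "{b'. (a, b') \<in> A \<times> V2 \<and> E2 b' b} = {b' \<in> V2. E2 b' b}"
      using \<open>a \<in> A\<close> by auto
    then have inside: "nbr_count (cart_edge E1 E2) (A \<times> V2) (a, b) = d + nbr_count E1 A a"
      using nbr_count_cart[of "A \<times> V2" E2 E1 a b] irrefl \<open>finite V1\<close> \<open>finite V2\<close> \<open>A \<subseteq> V1\<close>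
        regular_in_degree[OF g2 reg \<open>b \<in> V2\<close>] \<open>b \<in> V2\<close>
      by (simp add: slice_def finite_subset)
    have "V1 \<times> V2 - A \<times> V2 = (V1 - A) \<times> V2" by auto
    then have outside: "nbr_count (cart_edge E1 E2) (V1 \<times> V2 - A \<times> V2) (a, b)
                        = nbr_count E1 (V1 - A) a"
      using nbr_count_cart[of "(V1 - A) \<times> V2" E2 E1 a b] irrefl \<open>finite V1\<close> \<open>finite V2\<close>
        \<open>a \<in> A\<close> \<open>b \<in> V2\<close>
      by (simp add: slice_def set_diff_eq)
    show ?thesis using alliance_at_a inside outside by simp
  qed
  then show ?thesis
    using \<open>A \<subseteq> V1\<close> \<open>A \<noteq> {}\<close> \<open>V2 \<noteq> {}\<close> unfolding defensive_alliance_def by auto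
qed

lemma alliance_projection:
  assumes g1: "graph V1 E1" and g2: "graph V2 E2" and reg: "regular V2 E2 d"
    and S: "defensive_alliance (V1 \<times> V2) (cart_edge E1 E2) k S"
  shows "defensive_alliance V1 E1 (k - int d) (fst ` S)"
proof -
  let ?P = "fst ` S" and ?C = "V1 \<times> V2 - S"
  have "S \<subseteq> V1 \<times> V2" "S \<noteq> {}" "finite V1" "finite V2" and irrefl: "\<And>v. \<not> E2 v v"
    using S g1 g2 unfolding defensive_alliance_def graph_def by auto
  then have "finite S" "finite ?C"
    by (auto intro: finite_subset)
  then have "finite ?P" by simp
  have "int (nbr_count E1 (V1 - ?P) a) + (k - int d) \<le> int (nbr_count E1 ?P a)"
    if "a \<in> ?P" for a
  proof -
    obtain b where "(a, b) \<in> S" using \<open>a \<in> ?P\<close> by force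
    then have "b \<in> V2" using \<open>S \<subseteq> V1 \<times> V2\<close> by auto
    have alliance_at_ab: "int (nbr_count (cart_edge E1 E2) ?C (a, b)) + k
                          \<le> int (nbr_count (cart_edge E1 E2) S (a, b))"
      using S \<open>(a, b) \<in> S\<close> unfolding defensive_alliance_def by auto
    have "{b'. (a, b') \<in> S \<and> E2 b' b} \<subseteq> {b' \<in> V2. E2 b' b}"
      using \<open>S \<subseteq> V1 \<times> V2\<close> by auto
    then have column: "card {b'. (a, b') \<in> S \<and> E2 b' b} \<le> d"
      using card_mono[of "{b' \<in> V2. E2 b' b}"] \<open>finite V2\<close>
        regular_in_degree[OF g2 reg \<open>b \<in> V2\<close>] by fastforce
    have "nbr_count E1 (slice S b) a \<le> nbr_count E1 ?P a"
      using nbr_count_mono[OF \<open>finite ?P\<close> slice_subset_fst] .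
    then have inside: "nbr_count (cart_edge E1 E2) S (a, b) \<le> d + nbr_count E1 ?P a"
      using nbr_count_cart[of S E2 E1 a b] \<open>finite S\<close> irrefl column by simp
    have "V1 - ?P \<subseteq> slice ?C b"
      using \<open>b \<in> V2\<close> unfolding slice_def by force
    moreover have "finite (slice ?C b)"
      using \<open>finite ?C\<close> slice_subset_fst by (metis finite_imageI finite_subset)
    ultimately have "nbr_count E1 (V1 - ?P) a \<le> nbr_count E1 (slice ?C b) a"
      by (rule nbr_count_mono[rotated])
    then have outside: "nbr_count E1 (V1 - ?P) a \<le> nbr_count (cart_edge E1 E2) ?C (a, b)"
      using nbr_count_cart[of ?C E2 E1 a b] \<open>finite ?C\<close> irrefl by simp
    show ?thesis using alliance_at_ab inside outside by linarith
  qed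
  moreover have "?P \<noteq> {}" "?P \<subseteq> V1" using \<open>S \<subseteq> V1 \<times> V2\<close> \<open>S \<noteq> {}\<close> by auto
  ultimately show ?thesis unfolding defensive_alliance_def by auto
qed

theorem proposition2:
  fixes V1 :: "'a set" and E1 :: "'a \<Rightarrow> 'a \<Rightarrow> bool"
    and V2 :: "'b set" and E2 :: "'b \<Rightarrow> 'b \<Rightarrow> bool"
    and \<delta>2 :: nat and S1 :: "'a set" and k :: int
  assumes "graph V1 E1" and "graph V2 E2"
    and "regular V2 E2 \<delta>2"
    and "S1 \<subseteq> V1"
    and "int \<delta>2 - int (max_degree V1 E1) \<le> k"
    and "k \<le> int (max_degree V1 E1) + int \<delta>2"
  shows "daf_set (V1 \<times> V2) (cart_edge E1 E2) k (S1 \<times> V2) \<longleftrightarrow>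
         daf_set V1 E1 (k - int \<delta>2) S1"
proof
  assume product_free: "daf_set (V1 \<times> V2) (cart_edge E1 E2) k (S1 \<times> V2)"
  have "\<not> A \<subseteq> S1" if "defensive_alliance V1 E1 (k - int \<delta>2) A" for A
  proof
    assume "A \<subseteq> S1"
    then have "A \<times> V2 \<subseteq> S1 \<times> V2" by auto
    then show False
      using product_free alliance_product[OF assms(1-3) that] unfolding daf_set_def by blast
  qed
  then show "daf_set V1 E1 (k - int \<delta>2) S1"
    using \<open>S1 \<subseteq> V1\<close> unfolding daf_set_def by blast
next
  assume factor_free: "daf_set V1 E1 (k - int \<delta>2) S1"
  have "\<not> S \<subseteq> S1 \<times> V2" if "defensive_alliance (V1 \<times> V2) (cart_edge E1 E2) k S" for S
  proof
    assume "S \<subseteq> S1 \<times> V2"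
    then have "fst ` S \<subseteq> S1" by auto
    then show False
      using factor_free alliance_projection[OF assms(1-3) that] unfolding daf_set_def by blast
  qed
  then show "daf_set (V1 \<times> V2) (cart_edge E1 E2) k (S1 \<times> V2)"
    using \<open>S1 \<subseteq> V1\<close> unfolding daf_set_def by blast
qed

end
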